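(* Let $G$ be a graph on $[n]$ and $w\in\mathcal E_G$ nonzero. Then $L(w)$ and $R(w)$ are subgraphs of $G$, i.e. if $x_{ij}w=0$ or $wx_{ij}=0$ then $\{i,j\}$ is an edge of $G$.
   Context: Let $n\ge 1$. The Fomin–Kirillov algebra $\mathcal E_n$ is the associative $\mathbb Q$-algebra with generators $x_{ij}$ for ordered pairs of distinct $i,j\in[n]$, subject to $x_{ij}=-x_{ji}$, $x_{ij}^2=0$, $x_{ij}x_{kl}=x_{kl}x_{ij}$ for distinct $i,j,k,l$, and $x_{ij}x_{jk}+x_{jk}x_{ki}+x_{ki}x_{ij}=0$ for distinct $i,j,k$. For a simple graph $G$ on vertex set $[n]$, $\mathcal E_G$ is the subalgebra of $\mathcal E_n$ generated by the $x_{ij}$ with $\{i,j\}$ an edge of $G$. For $w\in\mathcal E_n$, the left descent set $L(w)$ is the graph on $[n]$ with an edge $\{i,j\}$ whenever $x_{ij}w=0$, and the right descent set $R(w)$ is the graph with an edge $\{i,j\}$ whenever $wx_{ij}=0$. *)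

theory Defs
  imports Main "HOL.Rat"
begin

(* Free associative Q-algebra on letters (i,j) :: nat \<times> nat.
   An element is a function from words to coefficients; elements of the
   free algebra are those with finite support. *)
type_synonym fa = "(nat \<times> nat) list \<Rightarrow> rat"

definition fa_finsupp :: "fa \<Rightarrow> bool" where
  "fa_finsupp p \<longleftrightarrow> finite {w. p w \<noteq> 0}"

definition fa_single :: "(nat \<times> nat) list \<Rightarrow> rat \<Rightarrow> fa" where
  "fa_single u c = (\<lambda>w. if w = u then c else 0)"

definition fa_gen :: "nat \<Rightarrow> nat \<Rightarrow> fa" where
  "fa_gen i j = fa_single [(i, j)] 1"

definition fa_mult :: "fa \<Rightarrow> fa \<Rightarrow> fa" where
  "fa_mult p q = (\<lambda>w. \<Sum>(u, v) \<in> {(u, v). u @ v = w}. p u * q v)"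

definition fa_add :: "fa \<Rightarrow> fa \<Rightarrow> fa" where
  "fa_add p q = (\<lambda>w. p w + q w)"

definition fa_smult :: "rat \<Rightarrow> fa \<Rightarrow> fa" where
  "fa_smult c p = (\<lambda>w. c * p w)"

definition fa_zero :: fa where
  "fa_zero = (\<lambda>w. 0)"

(* The two-sided ideal of the free algebra defining the Fomin-Kirillov
   algebra E_n, generated by its defining relations, vertices in {1..n}. *)
inductive fk_ideal :: "nat \<Rightarrow> fa \<Rightarrow> bool" for n :: nat where
  anti: "\<lbrakk>i \<in> {1..n}; j \<in> {1..n}; i \<noteq> j\<rbrakk> \<Longrightarrow>
          fk_ideal n (fa_add (fa_gen i j) (fa_gen j i))"
| sq: "\<lbrakk>i \<in> {1..n}; j \<in> {1..n}; i \<noteq> j\<rbrakk> \<Longrightarrow>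
          fk_ideal n (fa_mult (fa_gen i j) (fa_gen i j))"
| comm: "\<lbrakk>i \<in> {1..n}; j \<in> {1..n}; k \<in> {1..n}; l \<in> {1..n}; distinct [i, j, k, l]\<rbrakk> \<Longrightarrow>
          fk_ideal n (fa_add (fa_mult (fa_gen i j) (fa_gen k l))
                             (fa_smult (-1) (fa_mult (fa_gen k l) (fa_gen i j))))"
| tri: "\<lbrakk>i \<in> {1..n}; j \<in> {1..n}; k \<in> {1..n}; distinct [i, j, k]\<rbrakk> \<Longrightarrow>
          fk_ideal n (fa_add (fa_mult (fa_gen i j) (fa_gen j k))
                       (fa_add (fa_mult (fa_gen j k) (fa_gen k i))
                               (fa_mult (fa_gen k i) (fa_gen i j))))"
| zero: "fk_ideal n fa_zero"
| add: "\<lbrakk>fk_ideal n p; fk_ideal n q\<rbrakk> \<Longrightarrow> fk_ideal n (fa_add p q)"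
| smult: "fk_ideal n p \<Longrightarrow> fk_ideal n (fa_smult c p)"
| mult: "fk_ideal n p \<Longrightarrow>
          fk_ideal n (fa_mult (fa_single u 1) (fa_mult p (fa_single v 1)))"

(* w represents an element of the subalgebra E_G: it is a finite linear
   combination of words all of whose letters x_ij are edges of G. *)
definition in_EG :: "(nat \<Rightarrow> nat \<Rightarrow> bool) \<Rightarrow> fa \<Rightarrow> bool" where
  "in_EG E w \<longleftrightarrow> fa_finsupp w \<and> (\<forall>u. w u \<noteq> 0 \<longrightarrow> (\<forall>(a, b) \<in> set u. E a b))"

definition simple_graph_on :: "nat \<Rightarrow> (nat \<Rightarrow> nat \<Rightarrow> bool) \<Rightarrow> bool" where
  "simple_graph_on n E \<longleftrightarrow> (\<forall>i j. E i j \<longrightarrow> E j i) \<and> (\<forall>i. \<not> E i i)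
     \<and> (\<forall>i j. E i j \<longrightarrow> i \<in> {1..n} \<and> j \<in> {1..n})"

end

theory Submission
  imports Defs "HOL-Combinatorics.Permutations"
begin

text \<open>Fix \<open>i \<noteq> j\<close>, let \<open>s\<close> relabel the vertices by the transposition \<open>(i j)\<close>, and let \<open>\<Delta>\<close> be the
  braided derivative of the free algebra: the linear map with \<open>\<Delta>(x\<^sub>i\<^sub>j) = 1\<close>, \<open>\<Delta>(x\<^sub>j\<^sub>i) = -1\<close>,
  \<open>\<Delta>(x\<^sub>a\<^sub>b) = 0\<close> for all other letters, and \<open>\<Delta>(yz) = \<Delta>(y) s(z) + y \<Delta>(z)\<close>. It maps every
  defining relation of \<open>\<E>\<^sub>n\<close> into the ideal, and as \<open>s\<close> preserves the ideal, so does \<open>\<Delta>\<close>.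
  If \<open>{i, j}\<close> is not an edge of \<open>G\<close>, no word of \<open>w \<in> \<E>\<^sub>G\<close> contains \<open>x\<^sub>i\<^sub>j\<close> or \<open>x\<^sub>j\<^sub>i\<close>, so
  \<open>\<Delta>(w) = 0\<close> and \<open>\<Delta>(w x\<^sub>i\<^sub>j) = w\<close>: thus \<open>w x\<^sub>i\<^sub>j = 0\<close> forces \<open>w = 0\<close>. The case \<open>x\<^sub>i\<^sub>j w = 0\<close>
  reduces to this through the anti-automorphism reversing words and sending \<open>x\<^sub>a\<^sub>b\<close> to \<open>x\<^sub>b\<^sub>a\<close>.\<close>

section \<open>Multiplying by monomials\<close>

lemma sum_factorizations:
  "(\<Sum>(x, y)\<in>{(x, y). x @ y = w}. f x y) = (\<Sum>k\<le>length w. f (take k w) (drop k w))"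
proof -
  have "{(x, y). x @ y = w} = (\<lambda>k. (take k w, drop k w)) ` {..length w}"
  proof (intro set_eqI iffI)
    fix z assume "z \<in> {(x, y). x @ y = w}"
    then obtain x y where "z = (x, y)" "x @ y = w" by auto
    then show "z \<in> (\<lambda>k. (take k w, drop k w)) ` {..length w}"
      by (intro image_eqI[where x = "length x"]) auto
  qed auto
  moreover have "inj_on (\<lambda>k. (take k w, drop k w)) {..length w}"
    by (rule inj_onI) (metis atMost_iff length_take min.absorb2 prod.inject)
  ultimately show ?thesis
    by (simp add: sum.reindex)
qed

lemma fa_mult_single_left:
  "fa_mult (fa_single u c) q w = (if take (length u) w = u then c * q (drop (length u) w) else 0)"
proof -
  have "fa_mult (fa_single u c) q w =
      (\<Sum>k\<le>length w. if k = length u then (if take (length u) w = u then c * q (drop (length u) w) else 0) else 0)"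
    unfolding fa_mult_def fa_single_def sum_factorizations
    by (intro sum.cong refl) (auto simp: min_def split: if_splits)
  then show ?thesis
    by (auto simp: min_def)
qed

lemma fa_mult_single_right:
  "fa_mult q (fa_single v c) w =
     (if drop (length w - length v) w = v then q (take (length w - length v) w) * c else 0)"
proof -
  have "fa_mult q (fa_single v c) w =
      (\<Sum>k\<le>length w. if k = length w - length v
        then (if drop (length w - length v) w = v then q (take (length w - length v) w) * c else 0) else 0)"
    unfolding fa_mult_def fa_single_def sum_factorizations
    by (intro sum.cong) auto
  then show ?thesis
    by simp
qed

lemma fa_mult_single_single: "fa_mult (fa_single u a) (fa_single v b) = fa_single (u @ v) (a * b)"
proof (rule ext)
  fix w show "fa_mult (fa_single u a) (fa_single v b) w = fa_single (u @ v) (a * b) w"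
    unfolding fa_mult_single_left by (simp add: fa_single_def) (metis append_eq_conv_conj)
qed

lemma fa_mult_gen_gen: "fa_mult (fa_gen a b) (fa_gen c d) = fa_single [(a, b), (c, d)] 1"
  by (simp add: fa_gen_def fa_mult_single_single)

definition fa_sandwich :: "(nat \<times> nat) list \<Rightarrow> fa \<Rightarrow> (nat \<times> nat) list \<Rightarrow> fa" where
  "fa_sandwich u p v =
     (\<lambda>w. if \<exists>m. w = u @ m @ v then p (drop (length u) (take (length w - length v) w)) else 0)"

lemma fa_sandwich_append [simp]: "fa_sandwich u p v (u @ m @ v) = p m"
  by (auto simp: fa_sandwich_def)

lemma fa_sandwich_outside: "\<nexists>m. w = u @ m @ v \<Longrightarrow> fa_sandwich u p v w = 0"
  by (auto simp: fa_sandwich_def)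

lemma fa_mult_sandwich: "fa_mult (fa_single u 1) (fa_mult p (fa_single v 1)) = fa_sandwich u p v"
proof (rule ext)
  fix w :: "(nat \<times> nat) list"
  let ?w' = "drop (length u) w"
  have "fa_mult (fa_single u 1) (fa_mult p (fa_single v 1)) w =
     (if take (length u) w = u \<and> drop (length ?w' - length v) ?w' = v
      then p (take (length ?w' - length v) ?w') else 0)"
    by (simp add: fa_mult_single_left fa_mult_single_right)
  also have "\<dots> = fa_sandwich u p v w"
  proof (cases "\<exists>m. w = u @ m @ v")
    case False
    moreover have "w = u @ take (length ?w' - length v) ?w' @ v"
      if "take (length u) w = u" "drop (length ?w' - length v) ?w' = v"
      using that by (metis append_take_drop_id)
    ultimately show ?thesis
      by (auto simp: fa_sandwich_outside)
  qed auto
  finally show "fa_mult (fa_single u 1) (fa_mult p (fa_single v 1)) w = fa_sandwich u p v w" .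
qed

lemma fa_mult_gen_left: "fa_mult (fa_gen i j) p = fa_sandwich [(i, j)] p []"
proof -
  have "fa_mult p (fa_single [] 1) = p"
    by (rule ext) (simp add: fa_mult_single_right)
  then show ?thesis
    using fa_mult_sandwich[of "[(i, j)]" p "[]"] by (simp add: fa_gen_def)
qed

lemma fa_mult_gen_right: "fa_mult p (fa_gen i j) = fa_sandwich [] p [(i, j)]"
proof -
  have "fa_mult (fa_single [] 1) q = q" for q
    by (rule ext) (simp add: fa_mult_single_left)
  then show ?thesis
    using fa_mult_sandwich[of "[]" p "[(i, j)]"] by (simp add: fa_gen_def)
qed

lemma fa_finsupp_single: "fa_finsupp (fa_single u c)"
proof -
  have "{w. fa_single u c w \<noteq> 0} \<subseteq> {u}"
    by (auto simp: fa_single_def)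
  then show ?thesis
    unfolding fa_finsupp_def by (rule finite_subset) simp
qed

lemma fa_finsupp_add: "fa_finsupp p \<Longrightarrow> fa_finsupp q \<Longrightarrow> fa_finsupp (fa_add p q)"
  unfolding fa_finsupp_def fa_add_def
  by (rule finite_subset[of _ "{w. p w \<noteq> 0} \<union> {w. q w \<noteq> 0}"]) auto

lemma fa_finsupp_smult: "fa_finsupp p \<Longrightarrow> fa_finsupp (fa_smult c p)"
  unfolding fa_finsupp_def fa_smult_def
  by (rule finite_subset[of _ "{w. p w \<noteq> 0}"]) auto

lemma fa_finsupp_mult_gen_gen: "fa_finsupp (fa_mult (fa_gen a b) (fa_gen c d))"
  by (simp add: fa_mult_gen_gen fa_finsupp_single)

lemma support_fa_sandwich:
  "{w. fa_sandwich u p v w \<noteq> 0} \<subseteq> (\<lambda>m. u @ m @ v) ` {m. p m \<noteq> 0}"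
  by (auto simp: fa_sandwich_def)

lemma fa_finsupp_sandwich: "fa_finsupp p \<Longrightarrow> fa_finsupp (fa_sandwich u p v)"
  unfolding fa_finsupp_def by (rule finite_subset[OF support_fa_sandwich]) simp

lemma fk_ideal_finsupp: "fk_ideal n p \<Longrightarrow> fa_finsupp p"
proof (induction rule: fk_ideal.induct)
  case zero
  then show ?case by (simp add: fa_finsupp_def fa_zero_def)
qed (simp_all add: fa_finsupp_single fa_finsupp_add fa_finsupp_smult fa_finsupp_sandwich
       fa_mult_sandwich fa_mult_single_single fa_gen_def)

lemma fk_ideal_sandwich: "fk_ideal n p \<Longrightarrow> fk_ideal n (fa_sandwich u p v)"
  using fk_ideal.mult by (simp add: fa_mult_sandwich)

lemma fk_ideal_zero_fun: "fk_ideal n (\<lambda>w. 0)"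
  using fk_ideal.zero by (simp add: fa_zero_def)

lemma fk_ideal_add_fun: "fk_ideal n p \<Longrightarrow> fk_ideal n q \<Longrightarrow> fk_ideal n (\<lambda>w. p w + q w)"
  using fk_ideal.add by (simp add: fa_add_def)

lemma fk_ideal_scale_fun: "fk_ideal n p \<Longrightarrow> fk_ideal n (\<lambda>w. c * p w)"
  using fk_ideal.smult by (simp add: fa_smult_def)

lemma fk_ideal_sum_fun:
  "finite K \<Longrightarrow> (\<And>k. k \<in> K \<Longrightarrow> fk_ideal n (f k)) \<Longrightarrow> fk_ideal n (\<lambda>w. \<Sum>k\<in>K. f k w)"
  by (induction K rule: finite_induct) (simp_all add: fk_ideal_zero_fun fk_ideal_add_fun)

section \<open>Relabelling the vertices and reversing words\<close>

abbreviation relabel :: "(nat \<Rightarrow> nat) \<Rightarrow> (nat \<times> nat) list \<Rightarrow> (nat \<times> nat) list" where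
  "relabel \<pi> \<equiv> map (map_prod \<pi> \<pi>)"

lemma relabel_inv_relabel: "bij \<pi> \<Longrightarrow> relabel \<pi> (relabel (inv \<pi>) u) = u"
  by (induction u) (auto simp: bij_is_surj surj_f_inv_f)

lemma relabel_relabel_inv: "bij \<pi> \<Longrightarrow> relabel (inv \<pi>) (relabel \<pi> u) = u"
  by (induction u) (auto simp: bij_is_inj)

lemma fa_single_relabel: "bij \<pi> \<Longrightarrow> fa_single u c (relabel \<pi> w) = fa_single (relabel (inv \<pi>) u) c w"
  by (metis fa_single_def relabel_inv_relabel relabel_relabel_inv)

lemma fa_sandwich_relabel:
  assumes "bij \<pi>"
  shows "fa_sandwich u p v (relabel \<pi> w) =
    fa_sandwich (relabel (inv \<pi>) u) (\<lambda>m. p (relabel \<pi> m)) (relabel (inv \<pi>) v) w"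
proof (cases "\<exists>m. w = relabel (inv \<pi>) u @ m @ relabel (inv \<pi>) v")
  case True
  then obtain m where "w = relabel (inv \<pi>) u @ m @ relabel (inv \<pi>) v" by blast
  moreover from this have "relabel \<pi> w = u @ relabel \<pi> m @ v"
    using assms by (simp add: relabel_inv_relabel del: map_map)
  ultimately show ?thesis
    by simp
next
  case False
  moreover have "\<nexists>m. relabel \<pi> w = u @ m @ v"
  proof
    assume "\<exists>m. relabel \<pi> w = u @ m @ v"
    then obtain m where "relabel \<pi> w = u @ m @ v" by blast
    then have "w = relabel (inv \<pi>) u @ relabel (inv \<pi>) m @ relabel (inv \<pi>) v"
      using assms by (metis map_append relabel_relabel_inv)
    with False show False by blast
  qed
  ultimately show ?thesis
    by (simp add: fa_sandwich_outside)
qed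

lemma fk_ideal_relabel:
  assumes \<pi>: "\<pi> permutes {1..n}"
  shows "fk_ideal n p \<Longrightarrow> fk_ideal n (\<lambda>w. p (relabel \<pi> w))"
proof (induction rule: fk_ideal.induct)
  let ?\<sigma> = "inv \<pi>"
  have bij: "bij \<pi>" and \<sigma>_range: "\<And>a. a \<in> {1..n} \<Longrightarrow> ?\<sigma> a \<in> {1..n}"
    and \<sigma>_distinct: "\<And>xs. distinct xs \<Longrightarrow> distinct (map ?\<sigma> xs)"
    using permutes_bij[OF \<pi>] permutes_in_image[OF permutes_inv[OF \<pi>]]
      permutes_inj[OF permutes_inv[OF \<pi>]] by (auto simp: distinct_map inj_on_def)
  note simps = fa_single_relabel[OF bij] fa_gen_def fa_mult_single_single fa_add_def fa_smult_def
  {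
    case (anti a b)
    then show ?case
      using fk_ideal.anti[of "?\<sigma> a" n "?\<sigma> b"] \<sigma>_range \<sigma>_distinct[of "[a, b]"] by (simp add: simps)
  next
    case (sq a b)
    then show ?case
      using fk_ideal.sq[of "?\<sigma> a" n "?\<sigma> b"] \<sigma>_range \<sigma>_distinct[of "[a, b]"] by (simp add: simps)
  next
    case (comm a b c d)
    then show ?case
      using fk_ideal.comm[of "?\<sigma> a" n "?\<sigma> b" "?\<sigma> c" "?\<sigma> d"] \<sigma>_range \<sigma>_distinct[of "[a, b, c, d]"]
      by (simp add: simps)
  next
    case (tri a b c)
    then show ?case
      using fk_ideal.tri[of "?\<sigma> a" n "?\<sigma> b" "?\<sigma> c"] \<sigma>_range \<sigma>_distinct[of "[a, b, c]"]
      by (simp add: simps)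
  next
    case (mult p u v)
    then show ?case
      by (simp add: fa_mult_sandwich fa_sandwich_relabel[OF bij] fk_ideal_sandwich)
  }
qed (simp_all add: fa_zero_def fa_add_def fa_smult_def fk_ideal_zero_fun fk_ideal_add_fun fk_ideal_scale_fun)

definition rev_word :: "(nat \<times> nat) list \<Rightarrow> (nat \<times> nat) list" where
  "rev_word w = rev (map prod.swap w)"

lemma rev_word_rev_word [simp]: "rev_word (rev_word w) = w"
  by (simp add: rev_word_def rev_map)

lemma rev_word_append [simp]: "rev_word (x @ y) = rev_word y @ rev_word x"
  by (simp add: rev_word_def)

lemma rev_word_Nil [simp]: "rev_word [] = []"
  by (simp add: rev_word_def)

lemma rev_word_singleton [simp]: "rev_word [(a, b)] = [(b, a)]"
  by (simp add: rev_word_def)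

lemma rev_word_pair [simp]: "rev_word [(a, b), (c, d)] = [(d, c), (b, a)]"
  by (simp add: rev_word_def)

lemma swap_mem_rev_word: "(a, b) \<in> set u \<Longrightarrow> (b, a) \<in> set (rev_word u)"
  by (force simp: rev_word_def)

lemma fa_single_rev_word: "fa_single u c (rev_word w) = fa_single (rev_word u) c w"
  by (metis fa_single_def rev_word_rev_word)

lemma fa_sandwich_rev_word:
  "fa_sandwich u p v (rev_word w) = fa_sandwich (rev_word v) (\<lambda>m. p (rev_word m)) (rev_word u) w"
proof (cases "\<exists>m. w = rev_word v @ m @ rev_word u")
  case True
  then obtain m where "w = rev_word v @ m @ rev_word u" by blast
  moreover from this have "rev_word w = u @ rev_word m @ v"
    by simp
  ultimately show ?thesis
    by simp
next
  case False
  moreover have "\<nexists>m. rev_word w = u @ m @ v"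
  proof
    assume "\<exists>m. rev_word w = u @ m @ v"
    then obtain m where "rev_word w = u @ m @ v" by blast
    then have "w = rev_word v @ rev_word m @ rev_word u"
      by (metis append.assoc rev_word_append rev_word_rev_word)
    with False show False by blast
  qed
  ultimately show ?thesis
    by (simp add: fa_sandwich_outside)
qed

lemma fk_ideal_rev_word: "fk_ideal n p \<Longrightarrow> fk_ideal n (\<lambda>w. p (rev_word w))"
proof (induction rule: fk_ideal.induct)
  note simps = fa_single_rev_word fa_gen_def fa_mult_single_single fa_add_def fa_smult_def
  {
    case (anti a b)
    then show ?case
      using fk_ideal.anti[of b n a] by (simp add: simps add.commute)
  next
    case (sq a b)
    then show ?case
      using fk_ideal.sq[of b n a] by (simp add: simps)
  next
    case (comm a b c d)
    then show ?case
      using fk_ideal.comm[of d n c b a] by (auto simp: simps)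
  next
    case (tri a b c)
    then show ?case
      using fk_ideal.tri[of c n b a] by (auto simp: simps ac_simps)
  next
    case (mult p u v)
    then show ?case
      by (simp add: fa_mult_sandwich fa_sandwich_rev_word fk_ideal_sandwich)
  }
qed (simp_all add: fa_zero_def fa_add_def fa_smult_def fk_ideal_zero_fun fk_ideal_add_fun fk_ideal_scale_fun)

section \<open>The braided derivative \<open>\<Delta>\<^sub>i\<^sub>j\<close>\<close>

text \<open>\<open>deriv_word i j pre x post\<close> is the coefficient function of \<open>pre \<Delta>(x) post\<close>, where
  \<open>\<Delta>(y\<^sub>1\<dots>y\<^sub>m) = \<Sum>\<^sub>k \<Delta>(y\<^sub>k) y\<^sub>1\<dots>y\<^sub>k\<^sub>-\<^sub>1 s(y\<^sub>k\<^sub>+\<^sub>1\<dots>y\<^sub>m)\<close> with \<open>\<Delta>(y\<^sub>k) = letter_sign i j y\<^sub>k\<close>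
  and \<open>s = twist i j\<close>.\<close>

definition letter_sign :: "nat \<Rightarrow> nat \<Rightarrow> nat \<times> nat \<Rightarrow> rat" where
  "letter_sign i j x = (if x = (i, j) then 1 else if x = (j, i) then -1 else 0)"

abbreviation twist :: "nat \<Rightarrow> nat \<Rightarrow> (nat \<times> nat) list \<Rightarrow> (nat \<times> nat) list" where
  "twist i j \<equiv> relabel (transpose i j)"

definition deriv_word ::
  "nat \<Rightarrow> nat \<Rightarrow> (nat \<times> nat) list \<Rightarrow> (nat \<times> nat) list \<Rightarrow> (nat \<times> nat) list \<Rightarrow> fa" where
  "deriv_word i j pre x post = (\<lambda>w. \<Sum>k<length x.
     if w = pre @ take k x @ twist i j (drop (Suc k) x) @ post then letter_sign i j (x ! k) else 0)"

definition fa_deriv :: "nat \<Rightarrow> nat \<Rightarrow> fa \<Rightarrow> fa" where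
  "fa_deriv i j p = (\<lambda>w. \<Sum>u\<in>{u. p u \<noteq> 0}. p u * deriv_word i j [] u [] w)"

lemma twist_twist [simp]: "twist i j (twist i j u) = u"
  by (induction u) auto

lemma deriv_word_append:
  "deriv_word i j pre (x @ y) post w =
     deriv_word i j pre x (twist i j y @ post) w + deriv_word i j (pre @ x) y post w"
proof -
  have "(\<Sum>k<length x + length y. f k) = (\<Sum>k<length x. f k) + (\<Sum>k<length y. f (length x + k))"
    for f :: "nat \<Rightarrow> rat"
    by (induction y) (simp_all add: add.assoc)
  then show ?thesis
    unfolding deriv_word_def
    by simp (intro arg_cong2[where f = "(+)"] sum.cong refl; auto simp: nth_append)
qed

lemma deriv_word_in_context: "deriv_word i j pre x post (pre @ r @ post) = deriv_word i j [] x [] r"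
  unfolding deriv_word_def by (rule sum.cong) auto

lemma deriv_word_outside_context: "\<nexists>r. w = pre @ r @ post \<Longrightarrow> deriv_word i j pre x post w = 0"
  unfolding deriv_word_def by (rule sum.neutral) auto

lemma deriv_word_singleton: "deriv_word i j [] [x] [] w = (if w = [] then letter_sign i j x else 0)"
  by (simp add: deriv_word_def)

lemma deriv_word_pair:
  "deriv_word i j [] [x, y] [] w =
     (if w = twist i j [y] then letter_sign i j x else 0) + (if w = [x] then letter_sign i j y else 0)"
  by (simp add: deriv_word_def numeral_2_eq_2 lessThan_Suc)

lemma fa_deriv_eq_sum:
  "finite F \<Longrightarrow> {u. p u \<noteq> 0} \<subseteq> F \<Longrightarrow> fa_deriv i j p w = (\<Sum>u\<in>F. p u * deriv_word i j [] u [] w)"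
  unfolding fa_deriv_def by (rule sum.mono_neutral_left) auto

lemma fa_deriv_add:
  assumes "fa_finsupp p" "fa_finsupp q"
  shows "fa_deriv i j (fa_add p q) = fa_add (fa_deriv i j p) (fa_deriv i j q)"
proof (rule ext)
  fix w
  let ?F = "{u. p u \<noteq> 0} \<union> {u. q u \<noteq> 0}"
  have "finite ?F"
    using assms by (simp add: fa_finsupp_def)
  moreover have "{u. fa_add p q u \<noteq> 0} \<subseteq> ?F"
    by (auto simp: fa_add_def)
  ultimately show "fa_deriv i j (fa_add p q) w = fa_add (fa_deriv i j p) (fa_deriv i j q) w"
    by (simp add: fa_deriv_eq_sum[of ?F] fa_add_def sum.distrib distrib_right)
qed

lemma fa_deriv_smult: "fa_finsupp p \<Longrightarrow> fa_deriv i j (fa_smult c p) = fa_smult c (fa_deriv i j p)"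
proof (rule ext)
  fix w
  assume "fa_finsupp p"
  then have "finite {u. p u \<noteq> 0}"
    by (simp add: fa_finsupp_def)
  moreover have "{u. fa_smult c p u \<noteq> 0} \<subseteq> {u. p u \<noteq> 0}"
    by (auto simp: fa_smult_def)
  ultimately show "fa_deriv i j (fa_smult c p) w = fa_smult c (fa_deriv i j p) w"
    by (simp add: fa_deriv_eq_sum[of "{u. p u \<noteq> 0}"] fa_smult_def sum_distrib_left mult.assoc)
qed

lemma fa_deriv_single: "fa_deriv i j (fa_single u c) w = c * deriv_word i j [] u [] w"
proof -
  have "{x. fa_single u c x \<noteq> 0} \<subseteq> {u}"
    by (auto simp: fa_single_def)
  then show ?thesis
    by (simp add: fa_deriv_eq_sum[of "{u}"] fa_single_def)
qed

lemma sum_mult_if_sandwich: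
  assumes "finite F" "{m. p m \<noteq> 0} \<subseteq> F" "\<And>x. g (g x) = x"
  shows "(\<Sum>m\<in>F. p m * (if w = A @ g m @ B then e else 0)) = e * fa_sandwich A (\<lambda>x. p (g x)) B w"
proof (cases "\<exists>r. w = A @ r @ B")
  case True
  then obtain r where r: "w = A @ r @ B" by blast
  have "w = A @ g m @ B \<longleftrightarrow> m = g r" for m
    using assms(3) by (metis r same_append_eq append_same_eq)
  then have "(\<Sum>m\<in>F. p m * (if w = A @ g m @ B then e else 0)) = (\<Sum>m\<in>F. if m = g r then e * p m else 0)"
    by (intro sum.cong) auto
  also have "\<dots> = e * p (g r)"
    using assms(1,2) by (auto simp: sum.delta')
  finally show ?thesis
    using r by simp
next
  case False
  then show ?thesis
    by (auto simp: fa_sandwich_outside intro!: sum.neutral)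
qed

lemma sum_deriv_word_left_factor:
  assumes "finite P" "{m. p m \<noteq> 0} \<subseteq> P"
  shows "(\<Sum>m\<in>P. p m * deriv_word i j [] u (twist i j m @ B) w) =
    (\<Sum>k<length u. letter_sign i j (u ! k) *
       fa_sandwich (take k u @ twist i j (drop (Suc k) u)) (\<lambda>m. p (twist i j m)) B w)"
  unfolding deriv_word_def sum_distrib_left
proof (subst sum.swap, intro sum.cong refl)
  fix k
  show "(\<Sum>m\<in>P. p m * (if w = [] @ take k u @ twist i j (drop (Suc k) u) @ twist i j m @ B
          then letter_sign i j (u ! k) else 0)) =
      letter_sign i j (u ! k) * fa_sandwich (take k u @ twist i j (drop (Suc k) u)) (\<lambda>m. p (twist i j m)) B w"
    using sum_mult_if_sandwich[OF assms twist_twist[of i j], where A = "take k u @ twist i j (drop (Suc k) u)"]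
    by simp
qed

lemma sum_deriv_word_middle_factor:
  "(\<Sum>m\<in>{m. p m \<noteq> 0}. p m * deriv_word i j A m B w) = fa_sandwich A (fa_deriv i j p) B w"
  by (cases "\<exists>r. w = A @ r @ B")
    (auto simp: deriv_word_in_context fa_deriv_def deriv_word_outside_context fa_sandwich_outside)

lemma sum_deriv_word_right_factor:
  assumes "finite P" "{m. p m \<noteq> 0} \<subseteq> P"
  shows "(\<Sum>m\<in>P. p m * deriv_word i j (A @ m) v [] w) =
    (\<Sum>k<length v. letter_sign i j (v ! k) * fa_sandwich A p (take k v @ twist i j (drop (Suc k) v)) w)"
  unfolding deriv_word_def sum_distrib_left
proof (subst sum.swap, intro sum.cong refl)
  fix k
  show "(\<Sum>m\<in>P. p m * (if w = (A @ m) @ take k v @ twist i j (drop (Suc k) v) @ []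
          then letter_sign i j (v ! k) else 0)) =
      letter_sign i j (v ! k) * fa_sandwich A p (take k v @ twist i j (drop (Suc k) v)) w"
    using sum_mult_if_sandwich[OF assms, where g = "\<lambda>x. x" and A = A and B = "take k v @ twist i j (drop (Suc k) v)"]
    by simp
qed

lemma fa_deriv_sandwich:
  assumes "fa_finsupp p"
  shows "fa_deriv i j (fa_sandwich u p v) w =
    (\<Sum>k<length u. letter_sign i j (u ! k) *
       fa_sandwich (take k u @ twist i j (drop (Suc k) u)) (\<lambda>m. p (twist i j m)) (twist i j v) w)
    + fa_sandwich u (fa_deriv i j p) (twist i j v) w
    + (\<Sum>k<length v. letter_sign i j (v ! k) *
       fa_sandwich u p (take k v @ twist i j (drop (Suc k) v)) w)"
proof -
  let ?P = "{m. p m \<noteq> 0}"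
  have fin: "finite ?P"
    using assms by (simp add: fa_finsupp_def)
  have "fa_deriv i j (fa_sandwich u p v) w =
      (\<Sum>x\<in>(\<lambda>m. u @ m @ v) ` ?P. fa_sandwich u p v x * deriv_word i j [] x [] w)"
    using fin support_fa_sandwich by (intro fa_deriv_eq_sum) auto
  also have "\<dots> = (\<Sum>m\<in>?P. p m * deriv_word i j [] (u @ m @ v) [] w)"
    by (subst sum.reindex) (auto simp: inj_on_def)
  also have "\<dots> = (\<Sum>m\<in>?P. p m * deriv_word i j [] u (twist i j m @ twist i j v) w)
       + (\<Sum>m\<in>?P. p m * deriv_word i j u m (twist i j v) w)
       + (\<Sum>m\<in>?P. p m * deriv_word i j (u @ m) v [] w)"
    by (simp add: deriv_word_append sum.distrib distrib_left)
  finally show ?thesis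
    using fin by (simp only: sum_deriv_word_left_factor sum_deriv_word_middle_factor
        sum_deriv_word_right_factor order_refl)
qed

lemma fa_deriv_gen_gen:
  "fa_deriv i j (fa_mult (fa_gen a b) (fa_gen c d)) w =
     (if w = twist i j [(c, d)] then letter_sign i j (a, b) else 0)
     + (if w = [(a, b)] then letter_sign i j (c, d) else 0)"
  by (simp add: fa_mult_gen_gen fa_deriv_single deriv_word_pair)

lemma letter_sign_swap: "i \<noteq> j \<Longrightarrow> letter_sign i j (b, a) = - letter_sign i j (a, b)"
  by (auto simp: letter_sign_def)

lemma transpose_if_letter_sign_nonzero:
  assumes "letter_sign i j (a, b) \<noteq> 0"
  shows "transpose i j a = b" "transpose i j b = a" "c \<noteq> a \<Longrightarrow> c \<noteq> b \<Longrightarrow> transpose i j c = c"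
  using assms by (auto simp: letter_sign_def split: if_splits)

lemma fa_deriv_anti:
  assumes "i \<noteq> j"
  shows "fa_deriv i j (fa_add (fa_gen a b) (fa_gen b a)) = fa_zero"
proof (rule ext)
  fix w
  show "fa_deriv i j (fa_add (fa_gen a b) (fa_gen b a)) w = fa_zero w"
    unfolding fa_gen_def fa_deriv_add[OF fa_finsupp_single fa_finsupp_single]
    using letter_sign_swap[OF assms, of a b]
    by (simp add: fa_add_def fa_deriv_single deriv_word_singleton fa_zero_def)
qed

lemma fa_deriv_sq:
  "fa_deriv i j (fa_mult (fa_gen a b) (fa_gen a b)) =
     fa_smult (letter_sign i j (a, b)) (fa_add (fa_gen a b) (fa_gen b a))"
proof (rule ext)
  fix w
  show "fa_deriv i j (fa_mult (fa_gen a b) (fa_gen a b)) w =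
     fa_smult (letter_sign i j (a, b)) (fa_add (fa_gen a b) (fa_gen b a)) w"
  proof (cases "letter_sign i j (a, b) = 0")
    case False
    then have "twist i j [(a, b)] = [(b, a)]"
      by (simp add: transpose_if_letter_sign_nonzero(1,2))
    then have "fa_deriv i j (fa_mult (fa_gen a b) (fa_gen a b)) w =
      (if w = [(b, a)] then letter_sign i j (a, b) else 0) + (if w = [(a, b)] then letter_sign i j (a, b) else 0)"
      by (simp only: fa_deriv_gen_gen)
    \<comment> \<open>splitting off \<open>a = b\<close> first keeps the simplifier from looping on \<open>a = b\<close>, \<open>b = a\<close>\<close>
    then show ?thesis
      by (cases "a = b") (auto simp: fa_smult_def fa_add_def fa_gen_def fa_single_def algebra_simps)
  qed (simp add: fa_deriv_gen_gen fa_smult_def)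
qed

lemma twist_disjoint_letter:
  "letter_sign i j (a, b) \<noteq> 0 \<Longrightarrow> c \<notin> {a, b} \<Longrightarrow> d \<notin> {a, b} \<Longrightarrow> twist i j [(c, d)] = [(c, d)]"
  by (simp add: transpose_if_letter_sign_nonzero(3))

lemma twist_adjacent_letter:
  "letter_sign i j (a, b) \<noteq> 0 \<Longrightarrow> c \<notin> {a, b} \<Longrightarrow> twist i j [(b, c)] = [(a, c)]"
  by (simp add: transpose_if_letter_sign_nonzero)

lemma if_twist_eq:
  "(e \<noteq> 0 \<Longrightarrow> twist i j x = y) \<Longrightarrow> (if w = twist i j x then e else 0) = (if w = y then e else (0 :: rat))"
  by auto

lemma fa_deriv_gen_gen_disjoint:
  assumes "distinct [a, b, c, d]"
  shows "fa_deriv i j (fa_mult (fa_gen a b) (fa_gen c d)) w =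
     (if w = [(c, d)] then letter_sign i j (a, b) else 0) + (if w = [(a, b)] then letter_sign i j (c, d) else 0)"
  unfolding fa_deriv_gen_gen using assms by (intro arg_cong2[where f = "(+)"] if_twist_eq twist_disjoint_letter) auto

lemma fa_deriv_gen_gen_adjacent:
  assumes "distinct [a, b, c]"
  shows "fa_deriv i j (fa_mult (fa_gen a b) (fa_gen b c)) w =
     (if w = [(a, c)] then letter_sign i j (a, b) else 0) + (if w = [(a, b)] then letter_sign i j (b, c) else 0)"
  unfolding fa_deriv_gen_gen using assms by (intro arg_cong2[where f = "(+)"] if_twist_eq twist_adjacent_letter) auto

lemma fa_deriv_comm:
  assumes "distinct [a, b, c, d]"
  shows "fa_deriv i j (fa_add (fa_mult (fa_gen a b) (fa_gen c d))
                        (fa_smult (- 1) (fa_mult (fa_gen c d) (fa_gen a b)))) = fa_zero"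
  using assms
  by (intro ext) (simp add: fa_deriv_add fa_deriv_smult fa_finsupp_smult fa_finsupp_mult_gen_gen,
      simp add: fa_deriv_gen_gen_disjoint fa_add_def fa_smult_def fa_zero_def)

lemma fa_deriv_tri:
  assumes "distinct [a, b, c]"
  shows "fa_deriv i j (fa_add (fa_mult (fa_gen a b) (fa_gen b c))
                        (fa_add (fa_mult (fa_gen b c) (fa_gen c a))
                                (fa_mult (fa_gen c a) (fa_gen a b)))) =
     fa_add (fa_smult (letter_sign i j (a, b)) (fa_add (fa_gen a c) (fa_gen c a)))
       (fa_add (fa_smult (letter_sign i j (b, c)) (fa_add (fa_gen b a) (fa_gen a b)))
               (fa_smult (letter_sign i j (c, a)) (fa_add (fa_gen c b) (fa_gen b c))))"
proof (rule ext)
  fix w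
  show "fa_deriv i j (fa_add (fa_mult (fa_gen a b) (fa_gen b c))
                        (fa_add (fa_mult (fa_gen b c) (fa_gen c a))
                                (fa_mult (fa_gen c a) (fa_gen a b)))) w =
     fa_add (fa_smult (letter_sign i j (a, b)) (fa_add (fa_gen a c) (fa_gen c a)))
       (fa_add (fa_smult (letter_sign i j (b, c)) (fa_add (fa_gen b a) (fa_gen a b)))
               (fa_smult (letter_sign i j (c, a)) (fa_add (fa_gen c b) (fa_gen b c)))) w"
    using assms
    by (simp add: fa_deriv_add fa_finsupp_add fa_finsupp_mult_gen_gen,
        simp add: fa_add_def fa_smult_def fa_deriv_gen_gen_adjacent)
      (cases "w \<in> {[(a, c)], [(c, a)], [(b, a)], [(a, b)], [(c, b)], [(b, c)]}";
        auto simp: fa_add_def fa_smult_def fa_gen_def fa_single_def)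
qed

lemma fa_deriv_zero: "fa_deriv i j fa_zero = fa_zero"
  by (simp add: fa_deriv_def fa_zero_def)

lemma fk_ideal_fa_deriv:
  assumes ij: "i \<in> {1..n}" "j \<in> {1..n}" "i \<noteq> j"
  shows "fk_ideal n p \<Longrightarrow> fk_ideal n (fa_deriv i j p)"
proof (induction rule: fk_ideal.induct)
  case (anti a b)
  then show ?case
    by (simp add: fa_deriv_anti ij(3) fk_ideal.zero)
next
  case (sq a b)
  then show ?case
    by (simp add: fa_deriv_sq fk_ideal.anti fk_ideal.smult)
next
  case (comm a b c d)
  then show ?case
    by (simp add: fa_deriv_comm fk_ideal.zero)
next
  case (tri a b c)
  then show ?case
    by (simp add: fa_deriv_tri fk_ideal.add fk_ideal.smult fk_ideal.anti)
next
  case zero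
  then show ?case
    by (simp add: fa_deriv_zero fk_ideal.zero)
next
  case (add p q)
  then show ?case
    by (simp add: fa_deriv_add fk_ideal_finsupp fk_ideal.add)
next
  case (smult p c)
  then show ?case
    by (simp add: fa_deriv_smult fk_ideal_finsupp fk_ideal.smult)
next
  case (mult p u v)
  have "fk_ideal n (\<lambda>m. p (twist i j m))"
    using fk_ideal_relabel[OF permutes_swap_id[OF ij(1,2)]] mult.hyps .
  then have "fk_ideal n (\<lambda>w.
      (\<Sum>k<length u. letter_sign i j (u ! k) *
         fa_sandwich (take k u @ twist i j (drop (Suc k) u)) (\<lambda>m. p (twist i j m)) (twist i j v) w)
      + fa_sandwich u (fa_deriv i j p) (twist i j v) w
      + (\<Sum>k<length v. letter_sign i j (v ! k) *
         fa_sandwich u p (take k v @ twist i j (drop (Suc k) v)) w))"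
    using mult.hyps mult.IH
    by (intro fk_ideal_add_fun fk_ideal_sum_fun fk_ideal_scale_fun fk_ideal_sandwich) auto
  then show ?case
    by (simp add: fa_mult_sandwich fa_deriv_sandwich fk_ideal_finsupp[OF mult.hyps])
qed

section \<open>Cancelling a generator that does not occur\<close>

lemma fa_deriv_avoiding:
  assumes "\<And>u. p u \<noteq> 0 \<Longrightarrow> (i, j) \<notin> set u \<and> (j, i) \<notin> set u"
  shows "fa_deriv i j p = fa_zero"
proof -
  have "letter_sign i j (u ! k) = 0" if "p u \<noteq> 0" "k < length u" for u k
    using assms[OF that(1)] nth_mem[OF that(2)] by (auto simp: letter_sign_def)
  then have "deriv_word i j [] u [] w = 0" if "p u \<noteq> 0" for u w
    unfolding deriv_word_def using that by (intro sum.neutral) simp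
  then show ?thesis
    by (simp add: fa_deriv_def fa_zero_def)
qed

lemma fk_ideal_cancel_gen_right:
  assumes ij: "i \<in> {1..n}" "j \<in> {1..n}" "i \<noteq> j"
    and "fa_finsupp w"
    and "\<And>u. w u \<noteq> 0 \<Longrightarrow> (i, j) \<notin> set u \<and> (j, i) \<notin> set u"
    and "fk_ideal n (fa_mult w (fa_gen i j))"
  shows "fk_ideal n w"
proof -
  have "fa_deriv i j (fa_sandwich [] w [(i, j)]) = w"
    using fa_deriv_sandwich[OF assms(4), of i j "[]" "[(i, j)]"] fa_deriv_avoiding[OF assms(5)] ij(3)
    by (intro ext) (simp add: fa_zero_def fa_sandwich_def letter_sign_def)
  then show ?thesis
    using fk_ideal_fa_deriv[OF ij assms(6)] by (simp add: fa_mult_gen_right)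
qed

lemma fk_ideal_cancel_gen_left:
  assumes ij: "i \<in> {1..n}" "j \<in> {1..n}" "i \<noteq> j"
    and w: "fa_finsupp w"
    and avoids: "\<And>u. w u \<noteq> 0 \<Longrightarrow> (i, j) \<notin> set u \<and> (j, i) \<notin> set u"
    and "fk_ideal n (fa_mult (fa_gen i j) w)"
  shows "fk_ideal n w"
proof -
  define w' where "w' = (\<lambda>m. w (rev_word m))"
  have reversed: "fk_ideal n (fa_mult w' (fa_gen j i))"
    using fk_ideal_rev_word[OF assms(6)]
    by (simp add: w'_def fa_mult_gen_left fa_mult_gen_right fa_sandwich_rev_word)
  have finsupp: "fa_finsupp w'"
  proof -
    have "{m. w' m \<noteq> 0} \<subseteq> rev_word ` {m. w m \<noteq> 0}"
      unfolding w'_def by (metis (mono_tags) image_eqI mem_Collect_eq rev_word_rev_word subsetI)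
    then show ?thesis
      using w unfolding fa_finsupp_def by (meson finite_imageI finite_subset)
  qed
  have avoids': "(j, i) \<notin> set u \<and> (i, j) \<notin> set u" if "w' u \<noteq> 0" for u
  proof -
    have "(i, j) \<notin> set (rev_word u) \<and> (j, i) \<notin> set (rev_word u)"
      using avoids that by (simp add: w'_def)
    then show ?thesis
      by (metis swap_mem_rev_word)
  qed
  have "fk_ideal n w'"
    using ij(3) by (intro fk_ideal_cancel_gen_right[OF ij(2,1) _ finsupp avoids' reversed]) simp
  then have "fk_ideal n (\<lambda>m. w' (rev_word m))"
    by (rule fk_ideal_rev_word)
  then show ?thesis
    by (simp add: w'_def)
qed

theorem mainTheorem10:
  fixes n :: nat and E :: "nat \<Rightarrow> nat \<Rightarrow> bool" and w :: fa and i j :: nat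
  assumes "simple_graph_on n E"
    and "in_EG E w"
    and "\<not> fk_ideal n w"
    and "i \<in> {1..n}" and "j \<in> {1..n}" and "i \<noteq> j"
    and "fk_ideal n (fa_mult (fa_gen i j) w) \<or> fk_ideal n (fa_mult w (fa_gen i j))"
  shows "E i j"
proof (rule ccontr)
  assume "\<not> E i j"
  moreover have "E i j" if "E j i"
    using assms(1) that by (simp add: simple_graph_on_def)
  moreover have "E a b" if "w u \<noteq> 0" "(a, b) \<in> set u" for u a b
    using assms(2) that unfolding in_EG_def by fast
  ultimately have avoids: "(i, j) \<notin> set u \<and> (j, i) \<notin> set u" if "w u \<noteq> 0" for u
    using that by blast
  have "fa_finsupp w"
    using assms(2) by (simp add: in_EG_def)
  then have "fk_ideal n w"
    using assms(7) fk_ideal_cancel_gen_left[OF assms(4-6) _ avoids] fk_ideal_cancel_gen_right[OF assms(4-6) _ avoids]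
    by blast
  with assms(3) show False ..
qed

end
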